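(* Let $A\subset\mathbb{R}^3$ be a finite set. Then $A^{hv}$ is a $2+1$-complex.
   Context: Let $H=\{h_1<\dots<h_m\}$ be the set of $z$-coordinates of points of $A$, and let $\pi$ denote projection to the $(x,y)$-plane. The h-convex hull is $A^h=\bigcup_{h\in H}co(A\cap\{z=h\})$, where $co$ is the usual convex hull. The hv-convex hull is $A^{hv}=A^h\cup\bigcup_{j=1}^{m-1}\big(\pi(co(A\cap\{z=h_j\}))\cap\pi(co(A\cap\{z=h_{j+1}\}))\big)\times[h_j,h_{j+1}]$. A horizontal segment is one contained in a plane $\{z=c\}$; a vertical segment is parallel to the $z$ axis. A $2+1$-complex is a closed subset of $\mathbb{R}^3$ that is the union of a finite list $L$ of elements, each of one of the following kinds: points; relatively open horizontal segments whose two endpoints belong to $L$; relatively open vertical segments whose two endpoints belong to $L$; relatively open triangles in a horizontal plane whose three boundary segments belong to $L$; relatively open rectangles in a vertical plane, two of whose sides are parallel to the $z$ axis, whose four boundary segments belong to $L$; open subsets of $\mathbb{R}^3$ whose boundary is a union of elements of the previous kinds, all belonging to $L$. *)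

theory Defs
  imports "HOL-Analysis.Analysis"
begin

type_synonym pt3 = "real ^ 3"

definition zc :: "pt3 \<Rightarrow> real" where "zc p = p $ 3"

definition proj_xy :: "pt3 \<Rightarrow> real \<times> real" where "proj_xy p = (p $ 1, p $ 2)"

definition heights :: "pt3 set \<Rightarrow> real set" where "heights A = zc ` A"

definition slice :: "pt3 set \<Rightarrow> real \<Rightarrow> pt3 set" where
  "slice A h = {p \<in> A. zc p = h}"

definition h_hull :: "pt3 set \<Rightarrow> pt3 set" where
  "h_hull A = (\<Union>h\<in>heights A. convex hull (slice A h))"

definition consecutive :: "real set \<Rightarrow> real \<Rightarrow> real \<Rightarrow> bool" where
  "consecutive H h h' \<longleftrightarrow> h \<in> H \<and> h' \<in> H \<and> h < h' \<and> \<not> (\<exists>g\<in>H. h < g \<and> g < h')"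

definition hv_hull :: "pt3 set \<Rightarrow> pt3 set" where
  "hv_hull A = h_hull A \<union>
     (\<Union>{ {p. proj_xy p \<in> proj_xy ` (convex hull (slice A h)) \<inter> proj_xy ` (convex hull (slice A h'))
              \<and> h \<le> zc p \<and> zc p \<le> h'} | h h'. consecutive (heights A) h h'})"

definition e3 :: pt3 where "e3 = axis 3 1"

text \<open>Elements of a 2+1-complex of the lower-dimensional kinds (all except open 3-cells),
  relative to the list (finite set) L of elements.\<close>
definition low_cell :: "pt3 set set \<Rightarrow> pt3 set \<Rightarrow> bool" where
  "low_cell L C \<longleftrightarrow>
     (\<exists>a. C = {a})
   \<or> (\<exists>a b. a \<noteq> b \<and> zc a = zc b \<and> C = open_segment a b \<and> {a} \<in> L \<and> {b} \<in> L)
   \<or> (\<exists>a b. a \<noteq> b \<and> a $ 1 = b $ 1 \<and> a $ 2 = b $ 2 \<and> C = open_segment a b \<and> {a} \<in> L \<and> {b} \<in> L)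
   \<or> (\<exists>a b c. zc a = zc b \<and> zc b = zc c \<and> \<not> collinear {a, b, c}
        \<and> C = rel_interior (convex hull {a, b, c})
        \<and> open_segment a b \<in> L \<and> open_segment b c \<in> L \<and> open_segment a c \<in> L)
   \<or> (\<exists>a b s. a \<noteq> b \<and> zc a = zc b \<and> s > 0
        \<and> C = rel_interior (convex hull {a, b, a + s *\<^sub>R e3, b + s *\<^sub>R e3})
        \<and> open_segment a b \<in> L \<and> open_segment (a + s *\<^sub>R e3) (b + s *\<^sub>R e3) \<in> L
        \<and> open_segment a (a + s *\<^sub>R e3) \<in> L \<and> open_segment b (b + s *\<^sub>R e3) \<in> L)"

definition cell21 :: "pt3 set set \<Rightarrow> pt3 set \<Rightarrow> bool" where
  "cell21 L C \<longleftrightarrow> low_cell L C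
     \<or> (open C \<and> (\<exists>S \<subseteq> L. (\<forall>D\<in>S. low_cell L D) \<and> frontier C = \<Union>S))"

definition complex_2p1 :: "pt3 set \<Rightarrow> bool" where
  "complex_2p1 X \<longleftrightarrow> closed X \<and>
     (\<exists>L. finite L \<and> (\<forall>C\<in>L. cell21 L C) \<and> X = \<Union>L)"

end

theory Submission
  imports Defs
begin

text \<open>The h-convex hull is a finite union of horizontal convex polygons. By Caratheodory's
  theorem in the plane, each polygon is a finite union of horizontal triangles, and a triangle
  (or the segment or point it degenerates to) is built from its vertices, its open edges and its
  open interior. The rest of \<open>A\<^sup>h\<^sup>v\<close> is a finite union of prisms \<open>D \<times> [h, h']\<close> over
  planar polytopes \<open>D\<close>, one for each pair of consecutive heights. Such a prism is a closed
  convex body whose boundary consists of two horizontal polygons and of vertical rectangles over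
  the faces of \<open>D\<close> of dimension at most one; hence the interior of the prism is an admissible
  open 3-cell. Since a cell only requires its boundary pieces to occur somewhere in the list,
  the union of finitely many such lists is again admissible.\<close>

definition pt3_of :: "(real \<times> real) \<times> real \<Rightarrow> pt3" where
  "pt3_of q = vector [fst (fst q), snd (fst q), snd q]"

lemma pt3_of_nth [simp]:
  "pt3_of q $ 1 = fst (fst q)" "pt3_of q $ 2 = snd (fst q)" "pt3_of q $ 3 = snd q"
  by (simp_all add: pt3_of_def)

lemma zc_pt3_of [simp]: "zc (pt3_of q) = snd q"
  and proj_xy_pt3_of [simp]: "proj_xy (pt3_of q) = fst q"
  by (simp_all add: zc_def proj_xy_def)

lemma pt3_of_proj_xy_zc: "pt3_of (proj_xy p, zc p) = p"
  by (simp add: vec_eq_iff forall_3 proj_xy_def zc_def)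

lemma linear_pt3_of: "linear pt3_of"
  by (rule linearI) (simp_all add: vec_eq_iff forall_3)

lemma bij_pt3_of: "bij pt3_of"
  by (metis bijI' pt3_of_proj_xy_zc proj_xy_pt3_of zc_pt3_of prod.collapse)

lemma linear_proj_xy: "linear proj_xy"
  by (rule linearI) (simp_all add: proj_xy_def)

lemma pt3_of_closed_segment: "pt3_of ` closed_segment x y = closed_segment (pt3_of x) (pt3_of y)"
  by (simp add: closed_segment_linear_image linear_pt3_of)

lemma pt3_of_add_height: "pt3_of (u, h + s) = pt3_of (u, h) + s *\<^sub>R e3"
  by (simp add: vec_eq_iff forall_3 e3_def axis_def)

lemma interior_pt3_of_image: "interior (pt3_of ` S) = pt3_of ` interior S"
  by (rule interior_bijective_linear_image[OF linear_pt3_of bij_pt3_of])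

lemma closed_segment_Pair_same_fst:
  fixes x :: "'a::euclidean_space" and a b :: "'b::euclidean_space"
  shows "closed_segment (x, a) (x, b) = {x} \<times> closed_segment a b"
proof -
  have "{(x, a), (x, b)} = {x} \<times> {a, b}"
    by auto
  then show ?thesis
    unfolding segment_convex_hull by (metis convex_hull_Times convex_hull_singleton)
qed

lemma closed_segment_Pair_same_snd:
  fixes y :: "'a::euclidean_space" and a b :: "'b::euclidean_space"
  shows "closed_segment (a, y) (b, y) = closed_segment a b \<times> {y}"
proof -
  have "{(a, y), (b, y)} = {a, b} \<times> {y}"
    by auto
  then show ?thesis
    unfolding segment_convex_hull by (metis convex_hull_Times convex_hull_singleton)
qed

lemma zc_convex_hull:
  assumes "\<And>p. p \<in> S \<Longrightarrow> zc p = h" "q \<in> convex hull S"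
  shows "zc q = h"
proof -
  have "convex {p. zc p = h}"
    using convex_hyperplane[of e3 h] by (simp add: zc_def e3_def inner_axis')
  then show ?thesis using assms hull_minimal[of S "{p. zc p = h}" convex] by blast
qed

section \<open>Finite unions of cells\<close>

definition finite_cell_union :: "('a set set \<Rightarrow> 'a set \<Rightarrow> bool) \<Rightarrow> 'a set \<Rightarrow> bool" where
  "finite_cell_union P X \<longleftrightarrow> (\<exists>L. finite L \<and> (\<forall>C\<in>L. P L C) \<and> \<Union>L = X)"

lemma finite_cell_union_empty: "finite_cell_union P {}"
  unfolding finite_cell_union_def by auto

lemma finite_cell_union_Union:
  assumes mono: "\<And>L L' C. L \<subseteq> L' \<Longrightarrow> P L C \<Longrightarrow> P L' C"
    and "finite F" "\<And>X. X \<in> F \<Longrightarrow> finite_cell_union P X"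
  shows "finite_cell_union P (\<Union>F)"
proof -
  have "\<forall>X\<in>F. \<exists>L. finite L \<and> (\<forall>C\<in>L. P L C) \<and> \<Union>L = X"
    using assms(3) unfolding finite_cell_union_def by blast
  then obtain L where L: "\<And>X. X \<in> F \<Longrightarrow> finite (L X) \<and> (\<forall>C\<in>L X. P (L X) C) \<and> \<Union>(L X) = X"
    by metis
  have "finite (\<Union>(L ` F))"
    using assms(2) L by (intro finite_Union) auto
  moreover have "\<forall>C\<in>\<Union>(L ` F). P (\<Union>(L ` F)) C"
    using L by (blast intro: mono)
  moreover have "\<Union>(\<Union>(L ` F)) = \<Union>F"
  proof -
    have "\<Union>(\<Union>(L ` F)) = (\<Union>X\<in>F. \<Union>(L X))" by blast
    also have "\<dots> = \<Union>F" using L by simp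
    finally show ?thesis .
  qed
  ultimately show ?thesis
    unfolding finite_cell_union_def by blast
qed

lemma complex_2p1_iff: "complex_2p1 X \<longleftrightarrow> closed X \<and> finite_cell_union cell21 X"
  unfolding complex_2p1_def finite_cell_union_def by blast

lemma low_cell_mono: "L \<subseteq> L' \<Longrightarrow> low_cell L C \<Longrightarrow> low_cell L' C"
  unfolding low_cell_def by (elim disjE exE; blast)

lemma cell21_mono: "L \<subseteq> L' \<Longrightarrow> cell21 L C \<Longrightarrow> cell21 L' C"
  unfolding cell21_def by (metis low_cell_mono subset_trans)

lemma low_cells_imp_cells21: "finite_cell_union low_cell X \<Longrightarrow> finite_cell_union cell21 X"
  unfolding finite_cell_union_def cell21_def by blast

lemma low_cells_Union:
  "finite F \<Longrightarrow> (\<And>X. X \<in> F \<Longrightarrow> finite_cell_union low_cell X)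
    \<Longrightarrow> finite_cell_union low_cell (\<Union>F)"
  by (rule finite_cell_union_Union[OF low_cell_mono])

lemma low_cells_Un:
  assumes "finite_cell_union low_cell X" "finite_cell_union low_cell Y"
  shows "finite_cell_union low_cell (X \<union> Y)"
proof -
  have "finite_cell_union low_cell (\<Union>{X, Y})"
    by (rule low_cells_Union) (use assms in auto)
  then show ?thesis by simp
qed

lemma cells21_Union:
  "finite F \<Longrightarrow> (\<And>X. X \<in> F \<Longrightarrow> finite_cell_union cell21 X)
    \<Longrightarrow> finite_cell_union cell21 (\<Union>F)"
  by (rule finite_cell_union_Union[OF cell21_mono])

lemma cells21_convex_body:
  assumes "convex W" "closed W" "finite_cell_union low_cell (frontier W)"
  shows "finite_cell_union cell21 W"
proof -
  obtain L where L: "finite L" "\<forall>C\<in>L. low_cell L C" "\<Union>L = frontier W"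
    using assms(3) unfolding finite_cell_union_def by blast
  let ?L = "insert (interior W) L"
  have low: "\<forall>C\<in>L. low_cell ?L C"
    using L(2) low_cell_mono[of L ?L] by blast
  have "\<exists>S\<subseteq>?L. (\<forall>D\<in>S. low_cell ?L D) \<and> frontier (interior W) = \<Union>S"
  proof (cases "interior W = {}")
    case True
    then show ?thesis by auto
  next
    case False
    then have "frontier (interior W) = \<Union>L"
      using L(3) convex_closure_interior[OF assms(1) False] by (simp add: frontier_def)
    then show ?thesis
      using low by blast
  qed
  then have "cell21 ?L (interior W)"
    unfolding cell21_def by (simp add: open_interior)
  moreover have "\<Union>?L = W"
    using L(3) interior_subset[of W] assms(2) by (auto simp: frontier_def closure_closed)
  moreover have "\<forall>C\<in>L. cell21 ?L C"
    using low unfolding cell21_def by blast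
  ultimately show ?thesis
    unfolding finite_cell_union_def using L(1) by (intro exI[of _ ?L]) simp
qed

section \<open>Horizontal polygons\<close>

lemma low_cell_singleton: "low_cell L {a}"
  unfolding low_cell_def by blast

lemma low_cell_horizontal_segment:
  "a \<noteq> b \<Longrightarrow> zc a = zc b \<Longrightarrow> {a} \<in> L \<Longrightarrow> {b} \<in> L \<Longrightarrow> low_cell L (open_segment a b)"
  unfolding low_cell_def by blast

lemma low_cell_vertical_segment:
  "a \<noteq> b \<Longrightarrow> a $ 1 = b $ 1 \<Longrightarrow> a $ 2 = b $ 2 \<Longrightarrow> {a} \<in> L \<Longrightarrow> {b} \<in> L
   \<Longrightarrow> low_cell L (open_segment a b)"
  unfolding low_cell_def by blast

lemma low_cell_triangle:
  "zc a = zc b \<Longrightarrow> zc b = zc c \<Longrightarrow> \<not> collinear {a, b, c}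
   \<Longrightarrow> open_segment a b \<in> L \<Longrightarrow> open_segment b c \<in> L \<Longrightarrow> open_segment a c \<in> L
   \<Longrightarrow> low_cell L (rel_interior (convex hull {a, b, c}))"
  unfolding low_cell_def by blast

lemma low_cell_rectangle:
  "a \<noteq> b \<Longrightarrow> zc a = zc b \<Longrightarrow> s > 0
   \<Longrightarrow> open_segment a b \<in> L \<Longrightarrow> open_segment (a + s *\<^sub>R e3) (b + s *\<^sub>R e3) \<in> L
   \<Longrightarrow> open_segment a (a + s *\<^sub>R e3) \<in> L \<Longrightarrow> open_segment b (b + s *\<^sub>R e3) \<in> L
   \<Longrightarrow> low_cell L (rel_interior (convex hull {a, b, a + s *\<^sub>R e3, b + s *\<^sub>R e3}))"
  unfolding low_cell_def by blast

lemma low_cells_singleton: "finite_cell_union low_cell {a}"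
  unfolding finite_cell_union_def by (intro exI[of _ "{{a}}"]) (auto intro: low_cell_singleton)

lemma low_cells_segment:
  assumes "zc a = zc b \<or> (a $ 1 = b $ 1 \<and> a $ 2 = b $ 2)"
  shows "finite_cell_union low_cell (closed_segment a b)"
proof (cases "a = b")
  case True
  then show ?thesis using low_cells_singleton by simp
next
  case False
  let ?L = "{{a}, {b}, open_segment a b}"
  have "\<forall>C\<in>?L. low_cell ?L C"
    using False assms
    by (auto intro: low_cell_singleton low_cell_horizontal_segment low_cell_vertical_segment)
  moreover have "\<Union>?L = closed_segment a b"
    by (auto simp: open_segment_def)
  ultimately show ?thesis
    unfolding finite_cell_union_def by (intro exI[of _ ?L]) simp
qed

lemma low_cells_triangle:
  assumes "zc a = zc b" "zc b = zc c" "\<not> collinear {a, b, c}"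
  shows "finite_cell_union low_cell (convex hull {a, b, c})"
proof -
  let ?T = "convex hull {a, b, c}"
  have dist: "a \<noteq> b" "b \<noteq> c" "a \<noteq> c" and indep: "\<not> affine_dependent {a, b, c}"
    using assms(3) collinear_3_eq_affine_dependent by blast+
  have "rel_frontier ?T = \<Union>{convex hull ({a, b, c} - {x}) |x. x \<in> {a, b, c}}"
    by (rule rel_frontier_convex_hull_cases[OF indep])
  also have "\<dots> = \<Union>((\<lambda>x. convex hull ({a, b, c} - {x})) ` {a, b, c})"
    by (rule arg_cong[of _ _ Union]) blast
  also have "\<dots> = closed_segment a b \<union> closed_segment b c \<union> closed_segment a c"
    using dist by (simp add: insert_Diff_if segment_convex_hull insert_commute Un_ac)
  finally have frontier:
    "rel_frontier ?T = closed_segment a b \<union> closed_segment b c \<union> closed_segment a c" .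
  let ?L = "{{a}, {b}, {c}, open_segment a b, open_segment b c, open_segment a c, rel_interior ?T}"
  have "?T = rel_interior ?T \<union> rel_frontier ?T"
    using rel_interior_subset[of ?T]
    by (auto simp: rel_frontier_def closure_closed compact_imp_closed
        finite_imp_compact_convex_hull)
  also have "\<dots> = \<Union>?L"
    unfolding frontier by (auto simp: open_segment_def)
  finally have "\<Union>?L = ?T" ..
  moreover have "\<forall>C\<in>?L. low_cell ?L C"
    using dist assms by (simp add: low_cell_singleton low_cell_horizontal_segment low_cell_triangle)
  ultimately show ?thesis
    unfolding finite_cell_union_def by (meson finite.emptyI finite.insertI)
qed

lemma low_cells_horizontal_hull_card_le_3:
  assumes "finite S" "card S \<le> 3" "\<And>p. p \<in> S \<Longrightarrow> zc p = h"
  shows "finite_cell_union low_cell (convex hull S)"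
proof (cases "collinear S")
  case True
  show ?thesis
  proof (cases "S = {}")
    case True
    then show ?thesis by (simp add: finite_cell_union_empty)
  next
    case False
    have "collinear (convex hull S)"
      using True by (simp add: collinear_aff_dim aff_dim_convex_hull)
    then obtain u v where uv: "convex hull S = closed_segment u v"
      using False assms(1)
      by (metis compact_convex_collinear_segment convex_convex_hull convex_hull_eq_empty
          finite_imp_compact_convex_hull)
    have "zc u = h" "zc v = h"
      using zc_convex_hull[OF assms(3)] uv by (metis ends_in_segment)+
    then show ?thesis
      unfolding uv by (intro low_cells_segment) simp
  qed
next
  case False
  then have "card S = 3"
    using aff_dim_le_card[OF assms(1)] assms(2) by (simp add: collinear_aff_dim)
  then obtain a b c where S: "S = {a, b, c}"
    by (auto simp: card_3_iff)
  have "zc a = zc b" "zc b = zc c"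
    using assms(3) unfolding S by auto
  then show ?thesis
    using False low_cells_triangle unfolding S by blast
qed

lemma low_cells_horizontal_polygon:
  assumes "finite V" "\<And>p. p \<in> V \<Longrightarrow> zc p = h"
  shows "finite_cell_union low_cell (convex hull V)"
proof -
  have "V \<subseteq> {p. e3 \<bullet> p = h}"
    using assms(2) by (auto simp: e3_def inner_axis' zc_def)
  then have "aff_dim V \<le> aff_dim {p :: pt3. e3 \<bullet> p = h}"
    by (rule aff_dim_subset)
  then have dim: "aff_dim V \<le> 2"
    by (simp add: e3_def)
  let ?F = "(\<lambda>S. convex hull S) ` {S. S \<subseteq> V \<and> card S \<le> 3}"
  have "convex hull V = \<Union>?F"
  proof
    show "convex hull V \<subseteq> \<Union>?F"
    proof
      fix x assume "x \<in> convex hull V"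
      then obtain S where S: "S \<subseteq> V" "card S \<le> aff_dim V + 1" "x \<in> convex hull S"
        using caratheodory_aff_dim[of V] by auto
      then have "card S \<le> 3"
        using dim by linarith
      with S show "x \<in> \<Union>?F"
        by blast
    qed
    show "\<Union>?F \<subseteq> convex hull V"
      using hull_mono[of _ V convex] by blast
  qed
  also have "finite_cell_union low_cell \<dots>"
  proof (rule low_cells_Union)
    show "finite ?F"
      using assms(1) by (auto intro: finite_subset[of _ "Pow V"])
    show "finite_cell_union low_cell X" if "X \<in> ?F" for X
      using that assms finite_subset by (auto intro!: low_cells_horizontal_hull_card_le_3)
  qed
  finally show ?thesis .
qed

lemma low_cells_horizontal_polytope:
  assumes "polytope D"
  shows "finite_cell_union low_cell (pt3_of ` (D \<times> {c}))"
proof -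
  obtain V where V: "finite V" "D = convex hull V"
    using assms polytope_def by blast
  have "pt3_of ` (D \<times> {c}) = convex hull (pt3_of ` (V \<times> {c}))"
    unfolding V(2)
    by (simp add: convex_hull_Times convex_hull_linear_image[OF linear_pt3_of, symmetric])
  also have "finite_cell_union low_cell \<dots>"
    using V(1) by (intro low_cells_horizontal_polygon[where h = c]) auto
  finally show ?thesis .
qed

lemma h_hull_eq_Union: "h_hull A = \<Union>((\<lambda>h. convex hull slice A h) ` heights A)"
  unfolding h_hull_def ..

lemma finite_slice: "finite A \<Longrightarrow> finite (slice A h)"
  by (simp add: slice_def)

lemma zc_slice: "p \<in> slice A h \<Longrightarrow> zc p = h"
  by (simp add: slice_def)

lemma compact_h_hull: "finite A \<Longrightarrow> compact (h_hull A)"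
  unfolding h_hull_eq_Union
  by (intro compact_Union) (auto simp: heights_def finite_slice finite_imp_compact_convex_hull)

lemma low_cells_h_hull: "finite A \<Longrightarrow> finite_cell_union low_cell (h_hull A)"
  unfolding h_hull_eq_Union
  by (intro low_cells_Union)
    (auto simp: heights_def intro: low_cells_horizontal_polygon[OF finite_slice zc_slice])

section \<open>Vertical walls and prisms\<close>

lemma pt3_of_wall_eq_hull:
  assumes "h \<le> h'"
  shows "pt3_of ` (closed_segment u v \<times> {h..h'})
    = convex hull {pt3_of (u, h), pt3_of (v, h), pt3_of (u, h'), pt3_of (v, h')}"
proof -
  have "closed_segment u v \<times> {h..h'} = (convex hull {u, v}) \<times> (convex hull {h, h'})"
    using assms by (simp add: segment_convex_hull[symmetric] closed_segment_eq_real_ivl)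
  also have "\<dots> = convex hull ({u, v} \<times> {h, h'})"
    by (rule convex_hull_Times[symmetric])
  finally show ?thesis
    by (simp add: convex_hull_linear_image[OF linear_pt3_of] insert_commute)
qed

lemma rel_interior_pt3_of_wall:
  assumes "u \<noteq> v" "h < h'"
  shows "rel_interior (pt3_of ` (closed_segment u v \<times> {h..h'}))
    = pt3_of ` (open_segment u v \<times> {h<..<h'})"
proof -
  have "rel_interior (pt3_of ` (closed_segment u v \<times> {h..h'}))
      = pt3_of ` rel_interior (closed_segment u v \<times> {h..h'})"
    using linear_pt3_of bij_pt3_of
    by (simp add: rel_interior_injective_linear_image linear_conv_bounded_linear bij_is_inj)
  also have "rel_interior (closed_segment u v \<times> {h..h'}) = open_segment u v \<times> {h<..<h'}"
    using assms by (simp add: rel_interior_Times rel_interior_closed_segment)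
  finally show ?thesis .
qed

lemma pt3_of_horizontal_edge:
  "pt3_of ` (closed_segment u v \<times> {h}) = closed_segment (pt3_of (u, h)) (pt3_of (v, h))"
  by (simp add: pt3_of_closed_segment[symmetric] closed_segment_Pair_same_snd)

lemma pt3_of_vertical_edge:
  "h \<le> h' \<Longrightarrow> pt3_of ` ({u} \<times> {h..h'}) = closed_segment (pt3_of (u, h)) (pt3_of (u, h'))"
  by (simp add: pt3_of_closed_segment[symmetric] closed_segment_Pair_same_fst closed_segment_eq_real_ivl)

lemma pt3_of_wall_minus_rel_interior:
  assumes "u \<noteq> v" "h < h'"
  shows "pt3_of ` (closed_segment u v \<times> {h..h'}) - rel_interior (pt3_of ` (closed_segment u v \<times> {h..h'}))
    \<subseteq> pt3_of ` (closed_segment u v \<times> {h}) \<union> pt3_of ` (closed_segment u v \<times> {h'})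
      \<union> pt3_of ` ({u} \<times> {h..h'}) \<union> pt3_of ` ({v} \<times> {h..h'})"
proof -
  have "pt3_of ` (closed_segment u v \<times> {h..h'}) - pt3_of ` (open_segment u v \<times> {h<..<h'})
      = pt3_of ` (closed_segment u v \<times> {h..h'} - open_segment u v \<times> {h<..<h'})"
    by (rule image_set_diff[symmetric]) (use bij_pt3_of bij_is_inj in blast)
  also have "\<dots> \<subseteq> pt3_of ` (closed_segment u v \<times> {h} \<union> closed_segment u v \<times> {h'}
      \<union> {u} \<times> {h..h'} \<union> {v} \<times> {h..h'})"
    by (auto simp: open_segment_def)
  finally show ?thesis
    unfolding rel_interior_pt3_of_wall[OF assms] image_Un .
qed

lemma low_cells_wall:
  assumes "h < h'"
  shows "finite_cell_union low_cell (pt3_of ` (closed_segment u v \<times> {h..h'}))"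
    (is "finite_cell_union low_cell ?W")
proof -
  define p q p' q'
    where pts: "p = pt3_of (u, h)" "q = pt3_of (v, h)" "p' = pt3_of (u, h')" "q' = pt3_of (v, h')"
  have vertical: "pt3_of ` ({u} \<times> {h..h'}) = closed_segment p p'"
      "pt3_of ` ({v} \<times> {h..h'}) = closed_segment q q'"
    using assms by (simp_all add: pt3_of_vertical_edge pts)
  show ?thesis
  proof (cases "u = v")
    case True
    then show ?thesis
      using vertical(1) by (simp add: low_cells_segment pts)
  next
    case False
    have horizontal: "pt3_of ` (closed_segment u v \<times> {h}) = closed_segment p q"
        "pt3_of ` (closed_segment u v \<times> {h'}) = closed_segment p' q'"
      by (simp_all add: pt3_of_horizontal_edge pts)
    let ?L = "{{p}, {q}, {p'}, {q'}, open_segment p q, open_segment p' q', open_segment p p',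
      open_segment q q', rel_interior ?W}"
    have "\<Union>?L = ?W"
    proof
      show "?W \<subseteq> \<Union>?L"
        using pt3_of_wall_minus_rel_interior[OF False assms]
        unfolding horizontal vertical by (auto simp: open_segment_def)
      have "closed_segment p q \<union> closed_segment p' q' \<union> closed_segment p p' \<union> closed_segment q q' \<subseteq> ?W"
        unfolding horizontal[symmetric] vertical[symmetric] using assms by auto
      then show "\<Union>?L \<subseteq> ?W"
        using rel_interior_subset[of ?W] by (auto simp: open_segment_def)
    qed
    moreover have "\<forall>C\<in>?L. low_cell ?L C"
    proof -
      have shift: "p' = p + (h' - h) *\<^sub>R e3" "q' = q + (h' - h) *\<^sub>R e3"
        unfolding pts pt3_of_add_height[symmetric] by simp_all
      have "p \<noteq> q" "p' \<noteq> q'"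
        using False unfolding pts by (metis proj_xy_pt3_of fst_conv)+
      moreover have "p \<noteq> p'" "q \<noteq> q'"
        using assms unfolding pts by (metis zc_pt3_of snd_conv less_irrefl)+
      moreover have "zc p = zc q" "zc p' = zc q'"
          "p $ 1 = p' $ 1" "p $ 2 = p' $ 2" "q $ 1 = q' $ 1" "q $ 2 = q' $ 2"
        unfolding pts by simp_all
      moreover have "?W = convex hull {p, q, p', q'}"
        using assms by (simp add: pt3_of_wall_eq_hull pts)
      ultimately show ?thesis
        using assms low_cell_rectangle[of p q "h' - h"]
        by (simp add: low_cell_singleton low_cell_horizontal_segment low_cell_vertical_segment
            shift[symmetric])
    qed
    ultimately show ?thesis
      unfolding finite_cell_union_def by (meson finite.emptyI finite.insertI)
  qed
qed

lemma frontier_polygon_eq_Union_faces: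
  fixes D :: "(real \<times> real) set"
  assumes "polytope D"
  shows "frontier D = \<Union>{F. F face_of D \<and> aff_dim F \<le> 1}"
proof -
  have "convex D" "closed D"
    using assms by (simp_all add: polytope_imp_convex polytope_imp_closed)
  show ?thesis
  proof (cases "aff_dim D = 2")
    case True
    then have "frontier D = rel_frontier D"
      using interior_rel_interior_gen[of D] by (simp add: frontier_def rel_frontier_def)
    also have "\<dots> = \<Union>{F. F face_of D \<and> F \<noteq> D}"
      using assms by (simp add: rel_frontier_of_polyhedron_alt polytope_imp_polyhedron)
    also have "{F. F face_of D \<and> F \<noteq> D} = {F. F face_of D \<and> aff_dim F \<le> 1}"
      using True face_of_aff_dim_lt[OF \<open>convex D\<close>] by fastforce
    finally show ?thesis .
  next
    case False
    then have "frontier D = D"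
      using interior_rel_interior_gen[of D] \<open>closed D\<close> by (simp add: frontier_def)
    moreover have "aff_dim D \<le> 1"
      using False aff_dim_le_DIM[of D] by simp
    ultimately show ?thesis
      using face_of_refl[OF \<open>convex D\<close>] face_of_imp_subset by blast
  qed
qed

lemma low_cells_prism_side:
  fixes D :: "(real \<times> real) set"
  assumes "polytope D" "h < h'"
  shows "finite_cell_union low_cell (pt3_of ` (frontier D \<times> {h..h'}))"
proof -
  let ?F = "{F. F face_of D \<and> aff_dim F \<le> 1}"
  have "pt3_of ` (frontier D \<times> {h..h'}) = \<Union>((\<lambda>F. pt3_of ` (F \<times> {h..h'})) ` ?F)"
    unfolding frontier_polygon_eq_Union_faces[OF assms(1)] by blast
  also have "finite_cell_union low_cell \<dots>"
  proof (rule low_cells_Union)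
    show "finite ((\<lambda>F. pt3_of ` (F \<times> {h..h'})) ` ?F)"
      using finite_polytope_faces[OF assms(1)] by (auto intro: finite_subset)
    fix X assume "X \<in> (\<lambda>F. pt3_of ` (F \<times> {h..h'})) ` ?F"
    then obtain F where F: "F face_of D" "aff_dim F \<le> 1" and X: "X = pt3_of ` (F \<times> {h..h'})"
      by blast
    show "finite_cell_union low_cell X"
    proof (cases "F = {}")
      case True
      then show ?thesis by (simp add: X finite_cell_union_empty)
    next
      case False
      have "polytope F"
        using assms(1) F(1) by (rule face_of_polytope_polytope)
      then obtain a b where "F = closed_segment a b"
        using False F(2) compact_convex_collinear_segment
        by (metis collinear_aff_dim polytope_imp_compact polytope_imp_convex)
      then show ?thesis
        unfolding X using assms(2) by (simp add: low_cells_wall)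
    qed
  qed
  finally show ?thesis .
qed

lemma frontier_pt3_of_prism:
  assumes "closed D" "h < h'"
  shows "frontier (pt3_of ` (D \<times> {h..h'}))
    = pt3_of ` (D \<times> {h}) \<union> pt3_of ` (D \<times> {h'}) \<union> pt3_of ` (frontier D \<times> {h..h'})"
proof -
  have "closed (pt3_of ` (D \<times> {h..h'}))"
    using assms(1)
    by (simp add: closed_injective_linear_image linear_pt3_of bij_is_inj bij_pt3_of closed_Times)
  then have "frontier (pt3_of ` (D \<times> {h..h'}))
      = pt3_of ` (D \<times> {h..h'}) - pt3_of ` (interior D \<times> {h<..<h'})"
    by (simp add: frontier_def closure_closed interior_pt3_of_image interior_Times)
  also have "\<dots> = pt3_of ` (D \<times> {h..h'} - interior D \<times> {h<..<h'})"
    by (rule image_set_diff[symmetric]) (use bij_pt3_of bij_is_inj in blast)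
  also have "D \<times> {h..h'} - interior D \<times> {h<..<h'} = D \<times> {h} \<union> D \<times> {h'} \<union> frontier D \<times> {h..h'}"
    using assms interior_subset[of D] by (auto simp: frontier_def closure_closed)
  finally show ?thesis
    by (simp add: image_Un)
qed

lemma compact_pt3_of_prism:
  assumes "compact D"
  shows "compact (pt3_of ` (D \<times> {h..h'}))"
  using assms linear_continuous_on[OF linear_conv_bounded_linear[THEN iffD1, OF linear_pt3_of]]
  by (intro compact_continuous_image compact_Times) (auto intro: continuous_on_subset)

lemma cells21_prism:
  assumes "polytope D" "h < h'"
  shows "finite_cell_union cell21 (pt3_of ` (D \<times> {h..h'}))"
proof (rule cells21_convex_body)
  show "convex (pt3_of ` (D \<times> {h..h'}))"
    using assms(1)
    by (intro convex_linear_image linear_pt3_of convex_Times) (simp_all add: polytope_imp_convex)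
  show "closed (pt3_of ` (D \<times> {h..h'}))"
    using assms(1) by (simp add: compact_imp_closed compact_pt3_of_prism polytope_imp_compact)
  show "finite_cell_union low_cell (frontier (pt3_of ` (D \<times> {h..h'})))"
    unfolding frontier_pt3_of_prism[OF polytope_imp_closed[OF assms(1)] assms(2)]
    using assms by (intro low_cells_Un low_cells_horizontal_polytope low_cells_prism_side)
qed

section \<open>The hv-convex hull\<close>

lemma slab_eq_pt3_of_prism:
  "{p. proj_xy p \<in> D \<and> h \<le> zc p \<and> zc p \<le> h'} = pt3_of ` (D \<times> {h..h'})"
proof
  show "{p. proj_xy p \<in> D \<and> h \<le> zc p \<and> zc p \<le> h'} \<subseteq> pt3_of ` (D \<times> {h..h'})"
  proof
    fix p assume "p \<in> {p. proj_xy p \<in> D \<and> h \<le> zc p \<and> zc p \<le> h'}"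
    then have "(proj_xy p, zc p) \<in> D \<times> {h..h'}"
      by simp
    then show "p \<in> pt3_of ` (D \<times> {h..h'})"
      by (metis image_eqI pt3_of_proj_xy_zc)
  qed
  show "pt3_of ` (D \<times> {h..h'}) \<subseteq> {p. proj_xy p \<in> D \<and> h \<le> zc p \<and> zc p \<le> h'}"
    by auto
qed

lemma finite_consecutive: "finite H \<Longrightarrow> finite {(h, h'). consecutive H h h'}"
  by (rule finite_subset[of _ "H \<times> H"]) (auto simp: consecutive_def)

definition shadow :: "pt3 set \<Rightarrow> real \<Rightarrow> (real \<times> real) set" where
  "shadow A h = proj_xy ` (convex hull slice A h)"

lemma polytope_shadow: "finite A \<Longrightarrow> polytope (shadow A h)"
  unfolding shadow_def
  by (intro polytope_linear_image[OF linear_proj_xy] polytope_convex_hull finite_slice)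

lemma hv_hull_eq_Union_prisms:
  "hv_hull A = h_hull A \<union> (\<Union>(h, h')\<in>{(h, h'). consecutive (heights A) h h'}.
     pt3_of ` ((shadow A h \<inter> shadow A h') \<times> {h..h'}))"
  unfolding hv_hull_def shadow_def slab_eq_pt3_of_prism[symmetric] by blast

theorem lemma5p6:
  fixes A :: "(real ^ 3) set"
  assumes "finite A"
  shows "complex_2p1 (hv_hull A)"
proof -
  let ?C = "{(h, h'). consecutive (heights A) h h'}"
  let ?prism = "\<lambda>(h, h'). pt3_of ` ((shadow A h \<inter> shadow A h') \<times> {h..h'})"
  have hv: "hv_hull A = \<Union>(insert (h_hull A) (?prism ` ?C))"
    unfolding hv_hull_eq_Union_prisms by simp
  have "finite ?C"
    using assms by (simp add: heights_def finite_consecutive)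
  moreover have "compact (h_hull A)" "finite_cell_union cell21 (h_hull A)"
    using assms by (simp_all add: compact_h_hull low_cells_h_hull low_cells_imp_cells21)
  moreover have "compact (?prism c) \<and> finite_cell_union cell21 (?prism c)" if "c \<in> ?C" for c
  proof -
    obtain h h' where c: "c = (h, h')" "h < h'"
      using \<open>c \<in> ?C\<close> by (auto simp: consecutive_def)
    have "polytope (shadow A h \<inter> shadow A h')"
      using assms by (intro polytope_Int polytope_shadow)
    then show ?thesis
      using c by (simp add: compact_pt3_of_prism cells21_prism polytope_imp_compact)
  qed
  ultimately show ?thesis
    unfolding complex_2p1_iff hv
    by (intro conjI closed_Union cells21_Union) (auto intro: compact_imp_closed)
qed

end
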